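(* (1) For every $2\le n<\omega$, the algebra $K_n$ is a simple regular pseudocomplemented Kleene algebra of range $2$, i.e. a simple algebra of $\mathbf{K}_2$. (2) For $2\le n,m<\omega$, if $K_n$ is isomorphic to a subalgebra of $K_m$, then $n=m$.
   Context: For $2\le n<\omega$ let $A_n=\{a_i:0\le i<n\}$, $B_n=\{b_i:0\le i<n\}$ be disjoint, $S_n=A_n\cup B_n$, and $\zeta(S_n)$ a disjoint copy of $S_n$, with $\zeta$ interchanging each $s\in S_n$ and its copy $\zeta(s)$. $P_n=S_n\cup\zeta(S_n)$ (discrete topology) is ordered by the partial order whose only strict comparabilities are, for $0\le i,j<n$: $a_i<\zeta(a_j)$, $b_i<\zeta(b_j)$, $a_i<\zeta(b_j)$ iff $i\ne j$, $b_i<\zeta(a_j)$ iff $i\ne j$. $K_n$ is the dual algebra of $P_n$: the decreasing subsets $X$ of $P_n$ with $\cap,\cup,\emptyset,P_n$, $X^\ast=P_n\setminus[X)$ and $X'=P_n\setminus\zeta(X)$. $\mathbf{K}_2$ is the variety of pseudocomplemented de Morgan algebras (bounded distributive lattice with pseudocomplement ${}^\ast$ and de Morgan involution ${}^\prime$) satisfying $x\wedge x^{\prime\ast\prime}\le y\vee y^\ast$, $x\wedge x'\le y\vee y'$, and $(x\wedge x^{\prime\ast})^{2(\prime\ast)}=(x\wedge x^{\prime\ast})^{3(\prime\ast)}$, where $x^{0(\prime\ast)}=x$, $x^{(k+1)(\prime\ast)}=((x^{k(\prime\ast)})')^\ast$. *)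

theory Defs
  imports Main
begin

record 'a pdma =
  car  :: "'a set"
  mt   :: "'a \<Rightarrow> 'a \<Rightarrow> 'a"
  jn   :: "'a \<Rightarrow> 'a \<Rightarrow> 'a"
  zr   :: "'a"
  on   :: "'a"
  pc   :: "'a \<Rightarrow> 'a"          (* pseudocomplement * *)
  ng   :: "'a \<Rightarrow> 'a"          (* de Morgan involution ' *)

definition ple :: "'a pdma \<Rightarrow> 'a \<Rightarrow> 'a \<Rightarrow> bool" where
  "ple A x y \<longleftrightarrow> mt A x y = x"

definition is_pdma :: "'a pdma \<Rightarrow> bool" where
  "is_pdma A \<longleftrightarrow>
     zr A \<in> car A \<and> on A \<in> car A \<and>
     (\<forall>x\<in>car A. \<forall>y\<in>car A. mt A x y \<in> car A \<and> jn A x y \<in> car A) \<and>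
     (\<forall>x\<in>car A. pc A x \<in> car A \<and> ng A x \<in> car A) \<and>
     \<comment> \<open>bounded distributive lattice\<close>
     (\<forall>x\<in>car A. \<forall>y\<in>car A. \<forall>z\<in>car A.
        mt A x (mt A y z) = mt A (mt A x y) z \<and> jn A x (jn A y z) = jn A (jn A x y) z \<and>
        mt A x (jn A y z) = jn A (mt A x y) (mt A x z)) \<and>
     (\<forall>x\<in>car A. \<forall>y\<in>car A.
        mt A x y = mt A y x \<and> jn A x y = jn A y x \<and>
        mt A x (jn A x y) = x \<and> jn A x (mt A x y) = x) \<and>
     (\<forall>x\<in>car A. mt A (zr A) x = zr A \<and> jn A (on A) x = on A) \<and>
     \<comment> \<open>pseudocomplement\<close>
     (\<forall>x\<in>car A. \<forall>y\<in>car A. mt A x y = zr A \<longleftrightarrow> ple A y (pc A x)) \<and>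
     \<comment> \<open>de Morgan involution\<close>
     (\<forall>x\<in>car A. ng A (ng A x) = x) \<and>
     (\<forall>x\<in>car A. \<forall>y\<in>car A.
        ng A (jn A x y) = mt A (ng A x) (ng A y) \<and> ng A (mt A x y) = jn A (ng A x) (ng A y))"

definition npc_iter :: "'a pdma \<Rightarrow> nat \<Rightarrow> 'a \<Rightarrow> 'a" where
  "npc_iter A k = (\<lambda>x. pc A (ng A x)) ^^ k"

definition in_K2 :: "'a pdma \<Rightarrow> bool" where
  "in_K2 A \<longleftrightarrow> is_pdma A \<and>
     (\<forall>x\<in>car A. \<forall>y\<in>car A.
        ple A (mt A x (ng A (pc A (ng A x)))) (jn A y (pc A y))) \<and>
     (\<forall>x\<in>car A. \<forall>y\<in>car A. ple A (mt A x (ng A x)) (jn A y (ng A y))) \<and>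
     (\<forall>x\<in>car A. npc_iter A 2 (mt A x (pc A (ng A x))) = npc_iter A 3 (mt A x (pc A (ng A x))))"

definition congruence :: "'a pdma \<Rightarrow> ('a \<times> 'a) set \<Rightarrow> bool" where
  "congruence A \<theta> \<longleftrightarrow> equiv (car A) \<theta> \<and>
     (\<forall>x y u v. (x,y) \<in> \<theta> \<longrightarrow> (u,v) \<in> \<theta> \<longrightarrow>
        (mt A x u, mt A y v) \<in> \<theta> \<and> (jn A x u, jn A y v) \<in> \<theta>) \<and>
     (\<forall>x y. (x,y) \<in> \<theta> \<longrightarrow> (pc A x, pc A y) \<in> \<theta> \<and> (ng A x, ng A y) \<in> \<theta>)"

definition simple :: "'a pdma \<Rightarrow> bool" where
  "simple A \<longleftrightarrow> (\<exists>x\<in>car A. \<exists>y\<in>car A. x \<noteq> y) \<and>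
     (\<forall>\<theta>. congruence A \<theta> \<longrightarrow> \<theta> = Id_on (car A) \<or> \<theta> = car A \<times> car A)"

text \<open>Embedding = injective homomorphism, i.e. isomorphism onto a subalgebra.\<close>
definition embedding :: "'a pdma \<Rightarrow> 'b pdma \<Rightarrow> ('a \<Rightarrow> 'b) \<Rightarrow> bool" where
  "embedding A B h \<longleftrightarrow> inj_on h (car A) \<and> h ` car A \<subseteq> car B \<and>
     h (zr A) = zr B \<and> h (on A) = on B \<and>
     (\<forall>x\<in>car A. \<forall>y\<in>car A. h (mt A x y) = mt B (h x) (h y) \<and> h (jn A x y) = jn B (h x) (h y)) \<and>
     (\<forall>x\<in>car A. h (pc A x) = pc B (h x) \<and> h (ng A x) = ng B (h x))"

text \<open>A point (c, l, i): c = True means it lies in \<zeta>(S_n); l = False means letter a, l = True letter b;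
  i is the index. So (False,False,i) = a_i, (False,True,i) = b_i, (True,l,i) = \<zeta>(...).\<close>
type_synonym pt = "bool \<times> bool \<times> nat"

definition Pn :: "nat \<Rightarrow> pt set" where
  "Pn n = {(c,l,i). i < n}"

definition zeta :: "pt \<Rightarrow> pt" where
  "zeta p = (case p of (c,l,i) \<Rightarrow> (\<not> c, l, i))"

definition leP :: "pt \<Rightarrow> pt \<Rightarrow> bool" where
  "leP p q \<longleftrightarrow> p = q \<or>
     (case p of (c,l,i) \<Rightarrow> case q of (d,m,j) \<Rightarrow> \<not> c \<and> d \<and> (l = m \<or> i \<noteq> j))"

definition decr :: "nat \<Rightarrow> pt set \<Rightarrow> bool" where
  "decr n X \<longleftrightarrow> X \<subseteq> Pn n \<and> (\<forall>p\<in>X. \<forall>q\<in>Pn n. leP q p \<longrightarrow> q \<in> X)"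

definition upset :: "nat \<Rightarrow> pt set \<Rightarrow> pt set" where
  "upset n X = {q \<in> Pn n. \<exists>p\<in>X. leP p q}"

definition Kn :: "nat \<Rightarrow> pt set pdma" where
  "Kn n = \<lparr> car = {X. decr n X}, mt = (\<inter>), jn = (\<union>), zr = {}, on = Pn n,
            pc = (\<lambda>X. Pn n - upset n X), ng = (\<lambda>X. Pn n - zeta ` X) \<rparr>"

end

theory Submission
  imports Defs
begin

text \<open>
  Let \<open>S\<^sub>n\<close> be the set of minimal points of \<open>P\<^sub>n\<close>. In both \<open>K\<^sub>2\<close> inequalities the left-hand
  side lies below \<open>S\<^sub>n\<close> and the right-hand side above it. For the third identity, put
  \<open>w = (x \<and> x'\<^sup>*)'\<^sup>*\<close>: if \<open>w \<le> S\<^sub>n\<close> then \<open>w'\<^sup>* = 0\<close>, and otherwise \<open>w\<close> contains a maximal point,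
  which (as \<open>n \<ge> 2\<close>) forces \<open>x = 1\<close>; in either case \<open>w'\<^sup>*\<close> is a fixed point of \<open>'\<^sup>*\<close>.

  A congruence identifying two distinct elements identifies some atom \<open>{a}\<close>, \<open>a \<in> S\<^sub>n\<close>, with \<open>0\<close>.
  The unary polynomial \<open>x \<mapsto> x\<^sup>*'\<^sup>*'\<^sup>*\<close> sends \<open>{a}\<close> to \<open>0\<close> and \<open>0\<close> to \<open>1\<close>, so the congruence
  identifies \<open>0\<close> and \<open>1\<close> and is total.

  \<open>S\<^sub>n\<close> is the only element \<open>s\<close> of \<open>K\<^sub>n\<close> with \<open>s' = s\<close> and \<open>s\<^sup>* = 0\<close>, so an embedding
  \<open>K\<^sub>n \<rightarrow> K\<^sub>m\<close> maps \<open>S\<^sub>n\<close> to \<open>S\<^sub>m\<close>. It maps the atoms below \<open>S\<^sub>n\<close> to atoms: if the image of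
  \<open>{a}\<close> contained two minimal points, its pseudocomplement would lie below \<open>S\<^sub>m\<close>, whereas
  \<open>{a}\<^sup>*\<close> contains a maximal point. Hence the embedding induces a bijection \<open>S\<^sub>n \<rightarrow> S\<^sub>m\<close>,
  and \<open>2n = 2m\<close>.
\<close>

section \<open>The poset \<open>P\<^sub>n\<close>\<close>

lemma zeta_simp [simp]: "zeta (c, l, i) = (\<not> c, l, i)"
  by (simp add: zeta_def)

lemma zeta_zeta [simp]: "zeta (zeta p) = p"
  by (cases p) (simp add: zeta_def)

lemma mem_zeta_image_iff [simp]: "p \<in> zeta ` Z \<longleftrightarrow> zeta p \<in> Z"
  by (metis image_iff zeta_zeta)

lemma leP_simp [simp]:
  "leP (c, l, i) (d, m, j) \<longleftrightarrow> (c = d \<and> l = m \<and> i = j) \<or> (\<not> c \<and> d \<and> (l = m \<or> i \<noteq> j))"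
  by (auto simp: leP_def)

lemma leP_refl: "leP p p"
  by (simp add: leP_def)

lemma leP_trans: "leP p q \<Longrightarrow> leP q r \<Longrightarrow> leP p r"
  by (cases p; cases q; cases r) auto

lemma leP_zeta: "leP p q \<Longrightarrow> leP (zeta q) (zeta p)"
  by (cases p; cases q) auto

lemma mem_Pn_iff [simp]: "(c, l, i) \<in> Pn n \<longleftrightarrow> i < n"
  by (simp add: Pn_def)

lemma zeta_mem_Pn_iff [simp]: "zeta p \<in> Pn n \<longleftrightarrow> p \<in> Pn n"
  by (cases p) simp

lemma zeta_image_Pn [simp]: "zeta ` Pn n = Pn n"
  by (auto simp: Pn_def)

lemma exists_other_index: "2 \<le> (n::nat) \<Longrightarrow> \<exists>j<n. j \<noteq> i"
  by (rule exI[of _ "if i = 0 then 1 else 0"]) auto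

definition Sn :: "nat \<Rightarrow> pt set" where
  "Sn n = {p \<in> Pn n. \<not> fst p}"

lemma mem_Sn_iff [simp]: "(c, l, i) \<in> Sn n \<longleftrightarrow> \<not> c \<and> i < n"
  by (auto simp: Sn_def)

lemma mem_Sn_iff_ex: "p \<in> Sn n \<longleftrightarrow> (\<exists>l i. p = (False, l, i) \<and> i < n)"
  by (cases p) simp

lemma Sn_eq: "Sn n = (\<lambda>(l, i). (False, l, i)) ` (UNIV \<times> {..<n})"
  by (auto simp: mem_Sn_iff_ex)

lemma finite_Sn: "finite (Sn n)"
  by (simp add: Sn_eq)

lemma card_Sn: "card (Sn n) = 2 * n"
proof -
  have "inj_on (\<lambda>(l, i). (False, l, i)) (UNIV \<times> {..<n})"
    by (auto simp: inj_on_def)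
  then have "card (Sn n) = card (UNIV \<times> {..<n} :: (bool \<times> nat) set)"
    unfolding Sn_eq by (rule card_image)
  then show ?thesis
    by (simp add: card_cartesian_product)
qed

lemma upset_self: "X \<subseteq> Pn n \<Longrightarrow> X \<subseteq> upset n X"
  unfolding upset_def using leP_refl by blast

lemma minimal_mem_upset_iff:
  "W \<subseteq> Pn n \<Longrightarrow> (False, l, i) \<in> upset n W \<longleftrightarrow> (False, l, i) \<in> W"
  unfolding upset_def by (auto simp: leP_def)

lemma decr_subset: "decr n X \<Longrightarrow> X \<subseteq> Pn n"
  by (simp add: decr_def)

lemma decr_downward: "decr n X \<Longrightarrow> p \<in> X \<Longrightarrow> q \<in> Pn n \<Longrightarrow> leP q p \<Longrightarrow> q \<in> X"
  by (simp add: decr_def)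

lemma decr_empty: "decr n {}"
  by (simp add: decr_def)

lemma decr_Pn: "decr n (Pn n)"
  by (simp add: decr_def)

lemma decr_Sn: "decr n (Sn n)"
  by (auto simp: decr_def Sn_def leP_def)

lemma decr_atom: "i < n \<Longrightarrow> decr n {(False, l, i)}"
  by (auto simp: decr_def leP_def)

lemma decr_Int: "decr n X \<Longrightarrow> decr n Y \<Longrightarrow> decr n (X \<inter> Y)"
  by (auto simp: decr_def)

lemma decr_Un: "decr n X \<Longrightarrow> decr n Y \<Longrightarrow> decr n (X \<union> Y)"
  by (auto simp: decr_def)

lemma decr_Union: "(\<And>X. X \<in> F \<Longrightarrow> decr n X) \<Longrightarrow> decr n (\<Union>F)"
  unfolding decr_def by blast

lemma decr_pc: "decr n (Pn n - upset n X)"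
  unfolding decr_def upset_def using leP_trans by blast

lemma decr_ng:
  assumes "decr n X"
  shows "decr n (Pn n - zeta ` X)"
  unfolding decr_def
proof (intro conjI ballI impI)
  fix p q
  assume p: "p \<in> Pn n - zeta ` X" and q: "q \<in> Pn n" and "leP q p"
  have "zeta q \<notin> X"
  proof
    assume "zeta q \<in> X"
    moreover have "zeta p \<in> Pn n"
      using p by simp
    ultimately have "zeta p \<in> X"
      using decr_downward[OF assms] leP_zeta[OF \<open>leP q p\<close>] by blast
    with p show False
      by simp
  qed
  with q show "q \<in> Pn n - zeta ` X"
    by simp
qed auto

section \<open>\<open>K\<^sub>n\<close> lies in \<open>K\<^sub>2\<close>\<close>

lemma Kn_simps [simp]:
  "car (Kn n) = {X. decr n X}" "mt (Kn n) = (\<inter>)" "jn (Kn n) = (\<union>)"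
  "zr (Kn n) = {}" "on (Kn n) = Pn n" "pc (Kn n) = (\<lambda>X. Pn n - upset n X)"
  "ng (Kn n) = (\<lambda>X. Pn n - zeta ` X)"
  by (simp_all add: Kn_def)

lemma ple_Kn_iff: "ple (Kn n) X Y \<longleftrightarrow> X \<subseteq> Y"
  by (simp add: ple_def le_iff_inf)

lemma disjoint_iff_subset_pc:
  assumes "decr n X" and "decr n Y"
  shows "X \<inter> Y = {} \<longleftrightarrow> Y \<subseteq> Pn n - upset n X"
  using assms leP_refl unfolding decr_def upset_def by blast

lemma ng_ng: "X \<subseteq> Pn n \<Longrightarrow> Pn n - zeta ` (Pn n - zeta ` X) = X"
  by auto

lemma ng_Un: "Pn n - zeta ` (X \<union> Y) = (Pn n - zeta ` X) \<inter> (Pn n - zeta ` Y)"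
  by auto

lemma ng_Int: "Pn n - zeta ` (X \<inter> Y) = (Pn n - zeta ` X) \<union> (Pn n - zeta ` Y)"
  by auto

lemma is_pdma_Kn: "is_pdma (Kn n)"
  unfolding is_pdma_def ple_def Kn_simps mem_Collect_eq
  by (intro conjI ballI)
    (auto simp: decr_empty decr_Pn decr_Int decr_Un decr_pc decr_ng ng_ng ng_Un ng_Int
      Int_Un_distrib disjoint_iff_subset_pc le_iff_inf[symmetric] dest: decr_subset)

lemma mem_pc_ng_below:
  "q \<in> pc (Kn n) (ng (Kn n) Z) \<Longrightarrow> s \<in> Pn n \<Longrightarrow> leP s q \<Longrightarrow> zeta s \<in> Z"
  by (auto simp: upset_def)

lemma Sn_subset_Un_pc: "Y \<subseteq> Pn n \<Longrightarrow> Sn n \<subseteq> Y \<union> pc (Kn n) Y"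
  by (auto simp: Sn_def minimal_mem_upset_iff)

lemma Sn_subset_Un_ng: "decr n Y \<Longrightarrow> Sn n \<subseteq> Y \<union> ng (Kn n) Y"
  by (auto simp: Sn_def intro: decr_downward)

lemma Int_ng_pc_ng_subset_Sn:
  "X \<subseteq> Pn n \<Longrightarrow> X \<inter> ng (Kn n) (pc (Kn n) (ng (Kn n) X)) \<subseteq> Sn n"
  by (auto simp: Sn_def minimal_mem_upset_iff)

lemma Int_ng_subset_Sn:
  assumes "decr n X"
  shows "X \<inter> ng (Kn n) X \<subseteq> Sn n"
proof
  fix p assume p: "p \<in> X \<inter> ng (Kn n) X"
  obtain c l i where [simp]: "p = (c, l, i)"
    by (cases p)
  have "(False, l, i) \<in> X \<Longrightarrow> \<not> c"
    using p by auto
  moreover have "(False, l, i) \<in> X"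
    using decr_downward[OF assms, of p "(False, l, i)"] p by auto
  ultimately show "p \<in> Sn n"
    using p by simp
qed

lemma pc_eq_empty_if_Sn_subset:
  assumes "Sn n \<subseteq> W"
  shows "pc (Kn n) W = {}"
proof -
  have "p \<in> upset n W" if "p \<in> Pn n" for p
  proof -
    obtain c l i where [simp]: "p = (c, l, i)"
      by (cases p)
    have "(False, l, i) \<in> W" and "leP (False, l, i) p"
      using that assms by auto
    with that show ?thesis
      unfolding upset_def by blast
  qed
  then show ?thesis
    by auto
qed

lemma Sn_subset_ng: "W \<subseteq> Sn n \<Longrightarrow> Sn n \<subseteq> ng (Kn n) W"
  by (auto simp: mem_Sn_iff_ex)

lemma top_in_pc_ng_meet_imp_Pn:
  assumes "2 \<le> n" and X: "decr n X"
    and top: "(True, l, i) \<in> pc (Kn n) (ng (Kn n) (X \<inter> pc (Kn n) (ng (Kn n) X)))"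
  shows "X = Pn n"
proof -
  obtain j where j: "j < n" "j \<noteq> i"
    using exists_other_index[OF assms(1)] by blast
  have tops: "(True, l', i') \<in> X" if "i' < n" for l' i'
  proof -
    have "(True, l', j) \<in> pc (Kn n) (ng (Kn n) X)"
      using mem_pc_ng_below[OF top, of "(False, l', j)"] j by simp
    then show ?thesis
      using mem_pc_ng_below[of "(True, l', j)" n X "(False, l', i')"] that by simp
  qed
  show ?thesis
  proof
    show "X \<subseteq> Pn n"
      using X by (rule decr_subset)
    show "Pn n \<subseteq> X"
    proof
      fix p assume p: "p \<in> Pn n"
      obtain c l' i' where [simp]: "p = (c, l', i')"
        by (cases p)
      have "(True, l', i') \<in> X"
        using p by (simp add: tops)
      then show "p \<in> X"
        using decr_downward[OF X, of _ p] p by auto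
    qed
  qed
qed

lemma npc_iter_Kn_stable:
  assumes "2 \<le> n" and X: "decr n X"
  defines "Y \<equiv> X \<inter> pc (Kn n) (ng (Kn n) X)"
  shows "npc_iter (Kn n) 2 Y = npc_iter (Kn n) 3 Y"
proof -
  define F where "F Z = pc (Kn n) (ng (Kn n) Z)" for Z
  have iter: "npc_iter (Kn n) 2 Y = F (F Y)" "npc_iter (Kn n) 3 Y = F (F (F Y))"
    by (simp_all add: npc_iter_def F_def numeral_2_eq_2 numeral_3_eq_3)
  have F_eq_empty: "F W = {}" if "W \<subseteq> Sn n" for W
    unfolding F_def using pc_eq_empty_if_Sn_subset[OF Sn_subset_ng[OF that]] .
  show ?thesis
  proof (cases "F Y \<subseteq> Sn n")
    case True
    then show ?thesis
      by (simp add: iter F_eq_empty)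
  next
    case False
    then obtain p where p: "p \<in> F Y" "p \<notin> Sn n"
      by blast
    then obtain l i where "p = (True, l, i)"
      by (cases p) (auto simp: F_def)
    with p have "X = Pn n"
      by (intro top_in_pc_ng_meet_imp_Pn[OF assms(1) X]) (simp add: F_def Y_def)
    then have "F Y = Pn n" and "F (Pn n) = Pn n"
      by (simp_all add: F_def Y_def upset_def)
    then show ?thesis
      by (simp add: iter)
  qed
qed

lemma in_K2_Kn:
  assumes "2 \<le> n"
  shows "in_K2 (Kn n)"
  unfolding in_K2_def ple_Kn_iff
proof (intro conjI ballI is_pdma_Kn)
  fix X Y assume "X \<in> car (Kn n)" "Y \<in> car (Kn n)"
  then have X: "decr n X" and Y: "decr n Y"
    by simp_all
  show "mt (Kn n) X (ng (Kn n) (pc (Kn n) (ng (Kn n) X))) \<subseteq> jn (Kn n) Y (pc (Kn n) Y)"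
    using Int_ng_pc_ng_subset_Sn[OF decr_subset[OF X]] Sn_subset_Un_pc[OF decr_subset[OF Y]]
    by simp
  show "mt (Kn n) X (ng (Kn n) X) \<subseteq> jn (Kn n) Y (ng (Kn n) Y)"
    using Int_ng_subset_Sn[OF X] Sn_subset_Un_ng[OF Y] by simp
next
  fix X assume "X \<in> car (Kn n)"
  then show "npc_iter (Kn n) 2 (mt (Kn n) X (pc (Kn n) (ng (Kn n) X))) =
      npc_iter (Kn n) 3 (mt (Kn n) X (pc (Kn n) (ng (Kn n) X)))"
    using npc_iter_Kn_stable[OF assms] by simp
qed

section \<open>Simplicity of \<open>K\<^sub>n\<close>\<close>

lemma pc_ng_pc_atom:
  assumes "2 \<le> n" and "i < n"
  shows "pc (Kn n) (ng (Kn n) (pc (Kn n) {(False, l, i)})) = {(False, \<not> l, i)}"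
proof -
  define R where "R = insert (True, l, i) (Sn n - {(False, \<not> l, i)})"
  have ng_pc: "ng (Kn n) (pc (Kn n) {(False, l, i)}) = R"
    using assms(2) by (auto simp: R_def upset_def Sn_def)
  have R: "R \<subseteq> Pn n"
    using assms by (auto simp: R_def Sn_def)
  have "p \<in> upset n R" if p: "p \<in> Pn n" "p \<noteq> (False, \<not> l, i)" for p
  proof -
    obtain c l' j where [simp]: "p = (c, l', j)"
      by (cases p)
    show ?thesis
    proof (cases c)
      case False
      with p have "p \<in> R"
        by (auto simp: R_def)
      with R show ?thesis
        using upset_self by blast
    next
      case True
      obtain k where k: "k < n" "k \<noteq> j"
        using exists_other_index[OF assms(1)] by blast
      then have "(False, l, k) \<in> R" and "leP (False, l, k) p"
        using True by (auto simp: R_def)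
      with p show ?thesis
        unfolding upset_def by blast
    qed
  qed
  moreover have "(False, \<not> l, i) \<notin> upset n R"
    using minimal_mem_upset_iff[OF R] by (simp add: R_def)
  ultimately have "pc (Kn n) R = {(False, \<not> l, i)}"
    using assms(2) by (auto simp: upset_def)
  with ng_pc show ?thesis
    by simp
qed

lemma pc_Pn_Diff_top:
  assumes "i < n"
  shows "pc (Kn n) (Pn n - {(True, l, i)}) = {}"
proof -
  have "p \<in> upset n (Pn n - {(True, l, i)})" if p: "p \<in> Pn n" for p
  proof (cases "p = (True, l, i)")
    case True
    have "(False, l, i) \<in> Pn n - {(True, l, i)}" and "leP (False, l, i) p"
      using assms True by simp_all
    with p show ?thesis
      unfolding upset_def by blast
  next
    case False
    with p show ?thesis
      using upset_self[of "Pn n - {(True, l, i)}" n] by blast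
  qed
  then show ?thesis
    by auto
qed

lemma pc_ng_pc_ng_pc_atom:
  assumes "2 \<le> n" and "i < n"
  shows "pc (Kn n) (ng (Kn n) (pc (Kn n) (ng (Kn n) (pc (Kn n) {(False, l, i)})))) = {}"
proof -
  have "ng (Kn n) {(False, \<not> l, i)} = Pn n - {(True, \<not> l, i)}"
    using assms(2) by auto
  then show ?thesis
    using assms by (simp only: pc_ng_pc_atom pc_Pn_Diff_top)
qed

lemma pc_ng_pc_ng_pc_empty:
  "pc (Kn n) (ng (Kn n) (pc (Kn n) (ng (Kn n) (pc (Kn n) {})))) = Pn n"
  by (simp add: upset_def)

lemma congruence_sym: "congruence A \<theta> \<Longrightarrow> (x, y) \<in> \<theta> \<Longrightarrow> (y, x) \<in> \<theta>"
  unfolding congruence_def equiv_def by (blast dest: symD)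

lemma congruence_trans:
  "congruence A \<theta> \<Longrightarrow> (x, y) \<in> \<theta> \<Longrightarrow> (y, z) \<in> \<theta> \<Longrightarrow> (x, z) \<in> \<theta>"
  unfolding congruence_def equiv_def by (blast dest: transD)

lemma congruence_refl: "congruence A \<theta> \<Longrightarrow> x \<in> car A \<Longrightarrow> (x, x) \<in> \<theta>"
  unfolding congruence_def equiv_def by (blast dest: refl_onD)

lemma congruence_subset: "congruence A \<theta> \<Longrightarrow> \<theta> \<subseteq> car A \<times> car A"
  by (simp add: congruence_def equiv_type)

lemma congruence_mt:
  "congruence A \<theta> \<Longrightarrow> (x, y) \<in> \<theta> \<Longrightarrow> (u, v) \<in> \<theta> \<Longrightarrow> (mt A x u, mt A y v) \<in> \<theta>"
  by (simp add: congruence_def)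

lemma congruence_pc: "congruence A \<theta> \<Longrightarrow> (x, y) \<in> \<theta> \<Longrightarrow> (pc A x, pc A y) \<in> \<theta>"
  by (simp add: congruence_def)

lemma congruence_ng: "congruence A \<theta> \<Longrightarrow> (x, y) \<in> \<theta> \<Longrightarrow> (ng A x, ng A y) \<in> \<theta>"
  by (simp add: congruence_def)

lemma congruence_Kn_atom_imp_total:
  assumes "2 \<le> n" and \<theta>: "congruence (Kn n) \<theta>" and "i < n"
    and atom: "({(False, l, i)}, {}) \<in> \<theta>"
  shows "\<theta> = car (Kn n) \<times> car (Kn n)"
proof -
  have "(pc (Kn n) (ng (Kn n) (pc (Kn n) (ng (Kn n) (pc (Kn n) {(False, l, i)})))),
         pc (Kn n) (ng (Kn n) (pc (Kn n) (ng (Kn n) (pc (Kn n) {}))))) \<in> \<theta>"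
    by (intro congruence_pc[OF \<theta>] congruence_ng[OF \<theta>] atom)
  then have bot_top: "({}, Pn n) \<in> \<theta>"
    by (simp only: pc_ng_pc_ng_pc_atom[OF assms(1,3)] pc_ng_pc_ng_pc_empty)
  have to_bot: "(X, {}) \<in> \<theta>" if "X \<in> car (Kn n)" for X
  proof -
    have "(mt (Kn n) X (Pn n), mt (Kn n) X {}) \<in> \<theta>"
      by (intro congruence_mt[OF \<theta>] congruence_refl[OF \<theta> that] congruence_sym[OF \<theta> bot_top])
    with that show ?thesis
      by (simp add: Int_absorb2 decr_subset)
  qed
  show ?thesis
    using congruence_subset[OF \<theta>]
    by (auto intro: congruence_trans[OF \<theta> to_bot congruence_sym[OF \<theta> to_bot]])
qed

lemma congruence_Kn_nontrivial_imp_atom: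
  assumes \<theta>: "congruence (Kn n) \<theta>" and AB: "(A, B) \<in> \<theta>" "A \<noteq> B"
  obtains l i where "i < n" and "({(False, l, i)}, {}) \<in> \<theta>"
proof -
  have atom: "({(False, l, i)}, {}) \<in> \<theta>"
    if "(A', B') \<in> \<theta>" and "(False, l, i) \<in> A' - B'" and "i < n" for A' B' l i
  proof -
    have "(mt (Kn n) A' {(False, l, i)}, mt (Kn n) B' {(False, l, i)}) \<in> \<theta>"
      using that by (intro congruence_mt[OF \<theta>] congruence_refl[OF \<theta>]) (simp_all add: decr_atom)
    with that(2) show ?thesis
      by simp
  qed
  obtain A' B' p where AB': "(A', B') \<in> \<theta>" and p: "p \<in> A' - B'"
    using AB congruence_sym[OF \<theta>] by blast
  obtain c l i where [simp]: "p = (c, l, i)"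
    by (cases p)
  have "i < n"
    using p congruence_subset[OF \<theta>] AB' decr_subset by fastforce
  show ?thesis
  proof (cases c)
    case False
    with p have "({(False, l, i)}, {}) \<in> \<theta>"
      using atom[OF AB'] \<open>i < n\<close> by simp
    with \<open>i < n\<close> show ?thesis
      by (rule that)
  next
    case True
    have "(ng (Kn n) B', ng (Kn n) A') \<in> \<theta>"
      using congruence_sym[OF \<theta> congruence_ng[OF \<theta> AB']] .
    moreover have "(False, l, i) \<in> ng (Kn n) B' - ng (Kn n) A'"
      using p True \<open>i < n\<close> by simp
    ultimately have "({(False, l, i)}, {}) \<in> \<theta>"
      using atom \<open>i < n\<close> by blast
    with \<open>i < n\<close> show ?thesis
      by (rule that)
  qed
qed

lemma simple_Kn:
  assumes "2 \<le> n"
  shows "simple (Kn n)"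
  unfolding simple_def
proof (intro conjI allI impI)
  have "(False, False, 0) \<in> Pn n"
    using assms by simp
  then have "{} \<noteq> Pn n"
    by blast
  moreover have "{} \<in> car (Kn n)" and "Pn n \<in> car (Kn n)"
    by (simp_all add: decr_empty decr_Pn)
  ultimately show "\<exists>x\<in>car (Kn n). \<exists>y\<in>car (Kn n). x \<noteq> y"
    by blast
next
  fix \<theta> assume \<theta>: "congruence (Kn n) \<theta>"
  show "\<theta> = Id_on (car (Kn n)) \<or> \<theta> = car (Kn n) \<times> car (Kn n)"
  proof (cases "\<theta> \<subseteq> Id")
    case True
    then have "\<theta> = Id_on (car (Kn n))"
      using congruence_subset[OF \<theta>] congruence_refl[OF \<theta>] by (auto simp: Id_on_def)
    then show ?thesis ..
  next
    case False
    then obtain A B where "(A, B) \<in> \<theta>" "A \<noteq> B"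
      by auto
    then obtain l i where "i < n" "({(False, l, i)}, {}) \<in> \<theta>"
      using congruence_Kn_nontrivial_imp_atom[OF \<theta>] by blast
    then show ?thesis
      using congruence_Kn_atom_imp_total[OF assms \<theta>] by blast
  qed
qed

section \<open>Embeddings between the \<open>K\<^sub>n\<close>\<close>

lemma ng_Sn: "ng (Kn n) (Sn n) = Sn n"
  by (auto simp: Sn_def)

lemma pc_Sn: "pc (Kn n) (Sn n) = {}"
  by (rule pc_eq_empty_if_Sn_subset) simp

lemma Sn_unique:
  assumes W: "decr n W" and "ng (Kn n) W = W" and "pc (Kn n) W = {}"
  shows "W = Sn n"
proof
  show "Sn n \<subseteq> W"
  proof
    fix p assume p: "p \<in> Sn n"
    then obtain l i where [simp]: "p = (False, l, i)"
      by (auto simp: mem_Sn_iff_ex)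
    from p \<open>pc (Kn n) W = {}\<close> have "p \<in> upset n W"
      by (auto simp: Sn_def)
    then show "p \<in> W"
      using minimal_mem_upset_iff[OF decr_subset[OF W]] by simp
  qed
  show "W \<subseteq> Sn n"
  proof
    fix p assume p: "p \<in> W"
    obtain c l i where [simp]: "p = (c, l, i)"
      by (cases p)
    have "i < n"
      using p decr_subset[OF W] by auto
    have "c \<Longrightarrow> (False, l, i) \<in> W"
      using decr_downward[OF W p, of "(False, l, i)"] \<open>i < n\<close> by simp
    moreover have "c \<Longrightarrow> (False, l, i) \<notin> W"
      using p \<open>ng (Kn n) W = W\<close> by auto
    ultimately show "p \<in> Sn n"
      using \<open>i < n\<close> by auto
  qed
qed

lemma pc_subset_Sn_if_two_minimal:
  assumes "U \<subseteq> Sn n" and "u \<in> U" and "v \<in> U" and "u \<noteq> v"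
  shows "pc (Kn n) U \<subseteq> Sn n"
proof
  fix p assume p: "p \<in> pc (Kn n) U"
  obtain c l i where [simp]: "p = (c, l, i)"
    by (cases p)
  obtain lu iu where [simp]: "u = (False, lu, iu)"
    using assms(1,2) mem_Sn_iff_ex by blast
  obtain lv iv where [simp]: "v = (False, lv, iv)"
    using assms(1,3) mem_Sn_iff_ex by blast
  have "\<not> leP u p" and "\<not> leP v p"
    using p assms(2,3) by (auto simp: upset_def)
  then show "p \<in> Sn n"
    using p assms(4) by auto
qed

lemma embedding_Kn_inj: "embedding (Kn n) (Kn m) h \<Longrightarrow> inj_on h {X. decr n X}"
  by (simp add: embedding_def)

lemma embedding_Kn_decr: "embedding (Kn n) (Kn m) h \<Longrightarrow> decr n X \<Longrightarrow> decr m (h X)"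
  by (auto simp: embedding_def)

lemma embedding_Kn_empty: "embedding (Kn n) (Kn m) h \<Longrightarrow> h {} = {}"
  by (simp add: embedding_def)

lemma embedding_Kn_Int:
  "embedding (Kn n) (Kn m) h \<Longrightarrow> decr n X \<Longrightarrow> decr n Y \<Longrightarrow> h (X \<inter> Y) = h X \<inter> h Y"
  by (simp add: embedding_def)

lemma embedding_Kn_Un:
  "embedding (Kn n) (Kn m) h \<Longrightarrow> decr n X \<Longrightarrow> decr n Y \<Longrightarrow> h (X \<union> Y) = h X \<union> h Y"
  by (simp add: embedding_def)

lemma embedding_Kn_pc:
  "embedding (Kn n) (Kn m) h \<Longrightarrow> decr n X \<Longrightarrow> h (pc (Kn n) X) = pc (Kn m) (h X)"
  unfolding embedding_def by (simp del: Kn_simps add: Kn_simps(1))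

lemma embedding_Kn_ng:
  "embedding (Kn n) (Kn m) h \<Longrightarrow> decr n X \<Longrightarrow> h (ng (Kn n) X) = ng (Kn m) (h X)"
  unfolding embedding_def by (simp del: Kn_simps add: Kn_simps(1))

lemma embedding_Kn_subset_iff:
  assumes h: "embedding (Kn n) (Kn m) h" and X: "decr n X" and Y: "decr n Y"
  shows "h X \<subseteq> h Y \<longleftrightarrow> X \<subseteq> Y"
proof -
  have "h X \<subseteq> h Y \<longleftrightarrow> h (X \<inter> Y) = h X"
    using embedding_Kn_Int[OF h X Y] by blast
  also have "\<dots> \<longleftrightarrow> X \<inter> Y = X"
    using inj_on_eq_iff[OF embedding_Kn_inj[OF h]] X Y decr_Int by simp
  finally show ?thesis
    by blast
qed

lemma embedding_Kn_Sn:
  assumes h: "embedding (Kn n) (Kn m) h"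
  shows "h (Sn n) = Sn m"
proof (rule Sn_unique)
  show "decr m (h (Sn n))"
    using embedding_Kn_decr[OF h decr_Sn] .
  show "ng (Kn m) (h (Sn n)) = h (Sn n)"
    using embedding_Kn_ng[OF h decr_Sn] by (simp only: ng_Sn)
  show "pc (Kn m) (h (Sn n)) = {}"
    using embedding_Kn_pc[OF h decr_Sn] embedding_Kn_empty[OF h] by (simp only: pc_Sn)
qed

lemma embedding_Kn_atom:
  assumes h: "embedding (Kn n) (Kn m) h" and s: "s \<in> Sn n"
  obtains u where "u \<in> Sn m" and "h {s} = {u}"
proof -
  obtain l i where [simp]: "s = (False, l, i)" and i: "i < n"
    using s mem_Sn_iff_ex by blast
  have atom: "decr n {s}"
    using i by (simp add: decr_atom)
  have "h {s} \<subseteq> Sn m"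
    using embedding_Kn_subset_iff[OF h atom decr_Sn] s embedding_Kn_Sn[OF h] by simp
  moreover obtain u where u: "u \<in> h {s}"
  proof -
    have "h {s} \<noteq> h {}"
      using inj_onD[OF embedding_Kn_inj[OF h]] atom decr_empty by blast
    then show ?thesis
      using that embedding_Kn_empty[OF h] by auto
  qed
  moreover have "h {s} \<subseteq> {u}"
  proof
    fix v assume v: "v \<in> h {s}"
    show "v \<in> {u}"
    proof (rule ccontr)
      assume "v \<notin> {u}"
      then have "pc (Kn m) (h {s}) \<subseteq> Sn m"
        using pc_subset_Sn_if_two_minimal[OF \<open>h {s} \<subseteq> Sn m\<close> u v] by blast
      then have "h (pc (Kn n) {s}) \<subseteq> h (Sn n)"
        using embedding_Kn_pc[OF h atom] embedding_Kn_Sn[OF h] by simp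
      then have "pc (Kn n) {s} \<subseteq> Sn n"
        using embedding_Kn_subset_iff[OF h _ decr_Sn] decr_pc by simp
      moreover have "(True, \<not> l, i) \<in> pc (Kn n) {s}"
        using i by (simp add: upset_def)
      ultimately have "(True, \<not> l, i) \<in> Sn n"
        by blast
      then show False
        by simp
    qed
  qed
  ultimately show ?thesis
    using that by blast
qed

lemma embedding_Kn_Union:
  assumes h: "embedding (Kn n) (Kn m) h" and "finite F" and "F \<subseteq> {X. decr n X}"
  shows "h (\<Union>F) = \<Union>(h ` F)"
  using assms(2,3)
proof (induction F rule: finite_induct)
  case empty
  then show ?case
    using embedding_Kn_empty[OF h] by simp
next
  case (insert X F)
  then have "decr n X" and "decr n (\<Union>F)"
    by (auto intro: decr_Union)
  with insert show ?case
    using embedding_Kn_Un[OF h] by simp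
qed

lemma embedding_Kn_bij_Sn:
  assumes h: "embedding (Kn n) (Kn m) h"
  shows "bij_betw (\<lambda>s. the_elem (h {s})) (Sn n) (Sn m)"
proof -
  define g where "g s = the_elem (h {s})" for s
  have g: "h {s} = {g s} \<and> g s \<in> Sn m" if s: "s \<in> Sn n" for s
  proof -
    obtain u where "u \<in> Sn m" and "h {s} = {u}"
      using embedding_Kn_atom[OF h s] .
    then show ?thesis
      by (simp add: g_def)
  qed
  have atoms: "{s} \<in> {X. decr n X}" if "s \<in> Sn n" for s
    using that by (auto simp: mem_Sn_iff_ex decr_atom)
  have "inj_on g (Sn n)"
  proof (rule inj_onI)
    fix s t assume s: "s \<in> Sn n" and t: "t \<in> Sn n" and "g s = g t"
    then have "h {s} = h {t}"
      using g by simp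
    then have "{s} = {t}"
      using inj_onD[OF embedding_Kn_inj[OF h] _ atoms[OF s] atoms[OF t]] by blast
    then show "s = t"
      by simp
  qed
  moreover have "g ` Sn n = Sn m"
  proof -
    have "Sn m = h (\<Union>((\<lambda>s. {s}) ` Sn n))"
      using embedding_Kn_Sn[OF h] by simp
    also have "\<dots> = \<Union>(h ` (\<lambda>s. {s}) ` Sn n)"
      using atoms by (intro embedding_Kn_Union[OF h]) (auto simp: finite_Sn)
    also have "\<dots> = \<Union>((\<lambda>s. {g s}) ` Sn n)"
      unfolding image_image using g by (simp cong: image_cong)
    also have "\<dots> = g ` Sn n"
      by blast
    finally show ?thesis
      by simp
  qed
  ultimately show ?thesis
    unfolding bij_betw_def g_def by blast
qed

lemma embedding_Kn_eq: "embedding (Kn n) (Kn m) h \<Longrightarrow> n = m"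
  using bij_betw_same_card[OF embedding_Kn_bij_Sn] by (simp add: card_Sn)

theorem lemma6p2:
  shows "(\<forall>n::nat. 2 \<le> n \<longrightarrow> in_K2 (Kn n) \<and> simple (Kn n)) \<and>
         (\<forall>n m::nat. 2 \<le> n \<longrightarrow> 2 \<le> m \<longrightarrow> (\<exists>h. embedding (Kn n) (Kn m) h) \<longrightarrow> n = m)"
  using in_K2_Kn simple_Kn embedding_Kn_eq by blast

end
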